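(* Let $\mathcal{X}$ be a finite alphabet, $p_X$ a probability distribution on $\mathcal{X}$, and $\{\rho_x\}_{x\in\mathcal{X}}$ density operators on a finite-dimensional Hilbert space $\mathcal{H}$, with expected state $\rho\equiv\sum_{x}p_X(x)\rho_x$. Suppose there exist an orthogonal projector $\Pi$ (the "code subspace projector") and orthogonal projectors $\{\Pi_x\}_{x\in\mathcal{X}}$ (the "codeword subspace projectors") on $\mathcal{H}$, and constants $D,d>0$, $0<\epsilon\le 1/2$, such that for all $x\in\mathcal{X}$: $$\mathrm{Tr}\{\Pi\rho_x\}\ge 1-\epsilon,\quad \mathrm{Tr}\{\Pi_x\rho_x\}\ge 1-\epsilon,\quad \Pi_x\rho_x\Pi_x\ge \tfrac{1}{d}\Pi_x,\quad \Pi\rho\Pi\le \tfrac{1}{D}\Pi,\quad [\Pi_x,\rho_x]=0.$$ Let $\mathcal{M}=\{1,\dots,|\mathcal{M}|\}$ be a message set and let $\mathcal{C}=\{c_m\}_{m\in\mathcal{M}}$ be a random code whose codewords $c_m\in\mathcal{X}$ are drawn independently, each according to $p_X$. For a code $\mathcal{C}$ define the sequential decoding POVM $\{\Lambda_m\}_{m\in\mathcal{M}}$ by $$\Lambda_m\equiv \bar{Q}_{c_1}\cdots\bar{Q}_{c_{m-1}}\,\bar{\Pi}_{c_m}\,\bar{Q}_{c_{m-1}}\cdots\bar{Q}_{c_1},$$ where $Q_x\equiv I-\Pi_x$ and $\bar\Theta\equiv\Pi\Theta\Pi$ for any operator $\Theta$ (this corresponds to the receiver alternately measuring $\{\Pi,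 I-\Pi\}$ and $\{\Pi_{c_k},I-\Pi_{c_k}\}$ for $k=1,2,\dots$, declaring message $k$ at the first YES outcome of $\Pi_{c_k}$), and define the average success probability $\bar p_{\mathrm{succ}}(\mathcal{C})\equiv\frac{1}{|\mathcal{M}|}\sum_{m}\mathrm{Tr}\{\Lambda_m\rho_{c_m}\}$. Then, provided $2-\exp\{d|\mathcal{M}|/D\}>0$, $$\mathbb{E}_{\mathcal{C}}\{\bar p_{\mathrm{succ}}(\mathcal{C})\}\ \ge\ \left|(1-2\epsilon)\left(2-e^{\frac{d}{D}|\mathcal{M}|}\right)\right|^2 .$$
   Context: All Hilbert spaces are finite-dimensional. Operator inequalities $A\ge B$ mean $A-B$ is positive semidefinite. $\mathbb{E}_{\mathcal{C}}$ denotes expectation over the random choice of the code. *)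

theory Defs
  imports "HOL-Analysis.Analysis"
begin

definition cadj :: "complex^'n^'n \<Rightarrow> complex^'n^'n" where
  "cadj A = (\<chi> i j. cnj (A $ j $ i))"

definition mtrace :: "complex^'n^'n \<Rightarrow> complex" where
  "mtrace A = (\<Sum>i\<in>UNIV. A $ i $ i)"

definition qform :: "complex^'n^'n \<Rightarrow> complex^'n \<Rightarrow> complex" where
  "qform A v = (\<Sum>i\<in>UNIV. cnj (v $ i) * (A *v v) $ i)"

definition psd :: "complex^'n^'n \<Rightarrow> bool" where
  "psd A \<longleftrightarrow> cadj A = A \<and> (\<forall>v. qform A v \<in> \<real> \<and> 0 \<le> Re (qform A v))"

definition loewner_le :: "complex^'n^'n \<Rightarrow> complex^'n^'n \<Rightarrow> bool" where
  "loewner_le A B \<longleftrightarrow> psd (B - A)"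

definition density :: "complex^'n^'n \<Rightarrow> bool" where
  "density A \<longleftrightarrow> psd A \<and> mtrace A = 1"

definition projector :: "complex^'n^'n \<Rightarrow> bool" where
  "projector P \<longleftrightarrow> P ** P = P \<and> cadj P = P"

fun prodL :: "complex^'n^'n \<Rightarrow> ('x \<Rightarrow> complex^'n^'n) \<Rightarrow> 'x list \<Rightarrow> complex^'n^'n" where
  "prodL Cproj Px [] = mat 1"
| "prodL Cproj Px (x # xs) = (Cproj ** (mat 1 - Px x) ** Cproj) ** prodL Cproj Px xs"

fun prodR :: "complex^'n^'n \<Rightarrow> ('x \<Rightarrow> complex^'n^'n) \<Rightarrow> 'x list \<Rightarrow> complex^'n^'n" where
  "prodR Cproj Px [] = mat 1"
| "prodR Cproj Px (x # xs) = prodR Cproj Px xs ** (Cproj ** (mat 1 - Px x) ** Cproj)"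

text \<open>Sequential decoding POVM element for message m (0-indexed) of code c
  (a list of codewords): Lambda_m = Qbar_{c_0}..Qbar_{c_{m-1}} Pibar_{c_m} Qbar_{c_{m-1}}..Qbar_{c_0}.\<close>
definition seqPOVM :: "complex^'n^'n \<Rightarrow> ('x \<Rightarrow> complex^'n^'n) \<Rightarrow> 'x list \<Rightarrow> nat \<Rightarrow> complex^'n^'n" where
  "seqPOVM Cproj Px c m =
     prodL Cproj Px (take m c) ** (Cproj ** Px (c ! m) ** Cproj) ** prodR Cproj Px (take m c)"

definition psucc :: "complex^'n^'n \<Rightarrow> ('x \<Rightarrow> complex^'n^'n) \<Rightarrow> ('x \<Rightarrow> complex^'n^'n) \<Rightarrow> 'x list \<Rightarrow> real" where
  "psucc Cproj Px rho c =
     (1 / real (length c)) * (\<Sum>m<length c. Re (mtrace (seqPOVM Cproj Px c m ** rho (c ! m))))"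

definition code_expect :: "('x::finite \<Rightarrow> real) \<Rightarrow> nat \<Rightarrow> ('x list \<Rightarrow> real) \<Rightarrow> real" where
  "code_expect p M f = (\<Sum>c\<in>{c::'x list. length c = M}. (\<Prod>m<M. p (c ! m)) * f c)"

end

theory Submission
  imports Defs
begin

(*
  For message m with codeword x = c_m the decoding operator is Lambda_m = K^+ K with
  K = Pi_x Pi Qbar_(c_(m-1)) ... Qbar_(c_1), so Tr(Lambda_m rho_x) >= |Tr(K rho_x)|^2 (Cauchy-Schwarz).
  Averaging over the independent earlier codewords (Jensen) replaces K by Pi_x Pi B^m, where
  B = E Qbar = Pi - Abar and Abar = Pi (E Pi_x) Pi.  The hypotheses give Pi_x <= d rho_x and
  Pi rho Pi <= Pi/D, hence Tr(Abar Y) <= (d/D) Tr Y for psd Y in the code subspace, and by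
  iteration Tr(B^m Y) >= (1 - m d/D) Tr Y.  For Y = Pi Pi_x rho_x Pi (trace >= 1 - 2 eps) and
  1 - m d/D >= 2 - e^(M d/D) (m < M), every message succeeds on average with probability
  >= ((1 - 2 eps)(2 - e^(M d/D)))^2, and so does the average over messages.
*)

section \<open>Matrix algebra\<close>

lemma matrix_add_rdistrib: "(B + C) ** (A :: 'a::semiring_1^'n^'m) = B ** A + C ** A"
  by (simp add: matrix_matrix_mult_def vec_eq_iff sum.distrib algebra_simps)

lemma matrix_diff_ldistrib: "(A :: 'a::ring_1^'n^'m) ** (B - C) = A ** B - A ** C"
  by (simp add: matrix_matrix_mult_def vec_eq_iff sum_subtractf algebra_simps)

lemma matrix_diff_rdistrib: "(B - C) ** (A :: 'a::ring_1^'n^'m) = B ** A - C ** A"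
  by (simp add: matrix_matrix_mult_def vec_eq_iff sum_subtractf algebra_simps)

lemma matrix_scaleR_left: "((r::real) *\<^sub>R A) ** (B :: 'a::real_algebra_1^'n^'m) = r *\<^sub>R (A ** B)"
  by (simp add: scalar_matrix_assoc)

lemma matrix_scaleR_right: "(A :: 'a::real_algebra_1^'n^'m) ** ((r::real) *\<^sub>R B) = r *\<^sub>R (A ** B)"
  by (metis matrix_scalar_ac scalar_matrix_assoc)

lemma matrix_sum_left:
  "finite S \<Longrightarrow> (\<Sum>i\<in>S. f i) ** (B :: 'a::semiring_1^'n^'m) = (\<Sum>i\<in>S. f i ** B)"
  by (induct S rule: finite_induct) (auto simp: matrix_add_rdistrib)

lemma matrix_sum_right:
  "finite S \<Longrightarrow> (B :: 'a::semiring_1^'n^'m) ** (\<Sum>i\<in>S. f i) = (\<Sum>i\<in>S. B ** f i)"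
  by (induct S rule: finite_induct) (auto simp: matrix_add_ldistrib)

lemma scaleR_mat_nth [simp]: "((r::real) *\<^sub>R (A::complex^'n^'m))$i$j = of_real r * A$i$j"
  by (simp only: vector_scaleR_component) (simp add: scaleR_conv_of_real)

lemma mtrace_add: "mtrace (A + B) = mtrace A + mtrace B"
  by (simp add: mtrace_def sum.distrib)

lemma mtrace_diff: "mtrace (A - B) = mtrace A - mtrace B"
  by (simp add: mtrace_def sum_subtractf)

lemma mtrace_scaleR: "mtrace ((r::real) *\<^sub>R A) = of_real r * mtrace A"
  by (simp add: mtrace_def sum_distrib_left del: vector_scaleR_component)

lemma mtrace_sum: "finite S \<Longrightarrow> mtrace (\<Sum>i\<in>S. f i) = (\<Sum>i\<in>S. mtrace (f i))"
  by (induct S rule: finite_induct) (auto simp: mtrace_add mtrace_def[of 0])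

lemma mtrace_comm: "mtrace (A ** B) = mtrace (B ** A)"
  unfolding mtrace_def matrix_matrix_mult_def
  by (simp, subst sum.swap, simp add: mult.commute)

lemma mtrace_mat_left: "mtrace (mat c ** A) = c * mtrace A"
  by (simp add: mtrace_def matrix_matrix_mult_def mat_def sum_distrib_left
      if_distrib[where f="\<lambda>x. x * _"] cong: if_cong)

lemma mtrace_cadj: "mtrace (cadj A) = cnj (mtrace A)"
  by (simp add: cadj_def mtrace_def)

lemma cadj_cadj [simp]: "cadj (cadj A) = A"
  by (simp add: cadj_def vec_eq_iff)

lemma cadj_mult: "cadj (A ** B) = cadj B ** cadj A"
  by (simp add: cadj_def matrix_matrix_mult_def vec_eq_iff mult.commute)

lemma cadj_add: "cadj (A + B) = cadj A + cadj B"
  by (simp add: cadj_def vec_eq_iff)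

lemma cadj_diff: "cadj (A - B) = cadj A - cadj B"
  by (simp add: cadj_def vec_eq_iff)

lemma cadj_scaleR: "cadj ((r::real) *\<^sub>R A) = r *\<^sub>R cadj A"
  by (simp add: cadj_def vec_eq_iff)

lemma cadj_mat [simp]: "cadj (mat c) = mat (cnj c)"
  by (simp add: cadj_def vec_eq_iff mat_def)

lemma cadj_sum: "finite S \<Longrightarrow> cadj (\<Sum>i\<in>S. f i) = (\<Sum>i\<in>S. cadj (f i))"
  by (induct S rule: finite_induct) (auto simp: cadj_add cadj_def vec_eq_iff)

section \<open>Sesquilinear forms and the Cauchy--Schwarz inequality\<close>

definition sform :: "complex^'n^'n \<Rightarrow> complex^'n \<Rightarrow> complex^'n \<Rightarrow> complex" where
  "sform A x y = (\<Sum>i\<in>UNIV. cnj (x $ i) * (A *v y) $ i)"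

lemma qform_sform: "qform A v = sform A v v"
  by (simp add: qform_def sform_def)

lemma sform_expand: "sform A x y = (\<Sum>i\<in>UNIV. \<Sum>j\<in>UNIV. cnj (x$i) * A$i$j * y$j)"
  by (simp add: sform_def matrix_vector_mult_def sum_distrib_left mult.assoc)

lemma sform_herm: "cadj A = A \<Longrightarrow> sform A y x = cnj (sform A x y)"
proof -
  assume herm: "cadj A = A"
  have e: "cnj (A$i$j) = A$j$i" for i j
    using arg_cong[OF herm, of "\<lambda>B. B$j$i"] by (simp add: cadj_def)
  have "cnj (sform A x y) = (\<Sum>i\<in>UNIV. \<Sum>j\<in>UNIV. cnj (cnj (x$i) * A$i$j * y$j))"
    by (simp only: sform_expand cnj_sum)
  also have "\<dots> = (\<Sum>i\<in>UNIV. \<Sum>j\<in>UNIV. cnj (y$j) * A$j$i * x$i)"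
    by (intro sum.cong refl) (simp add: e mult_ac)
  also have "\<dots> = sform A y x"
    unfolding sform_expand by (rule sum.swap)
  finally show ?thesis by simp
qed

lemma sform_add1: "sform A (x + y) z = sform A x z + sform A y z"
  by (simp add: sform_def sum.distrib algebra_simps)

lemma sform_add2: "sform A x (y + z) = sform A x y + sform A x z"
  by (simp add: sform_def sum.distrib algebra_simps)

lemma sform_smult1: "sform A (c *s x) y = cnj c * sform A x y"
  by (simp add: sform_def sum_distrib_left algebra_simps)

lemma sform_smult2: "sform A x (c *s y) = c * sform A x y"
  by (simp add: sform_expand sum_distrib_left algebra_simps)

lemma qform_line:
  assumes "cadj A = A"
  shows "qform A (x + c *s y) = qform A x + c * cnj (sform A y x) + cnj c * sform A y x
     + (c * cnj c) * qform A y"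
  using sform_herm[OF assms, of x y]
  by (simp add: qform_sform sform_add1 sform_add2 sform_smult1 sform_smult2 algebra_simps)

lemma psd_qform_real: "psd A \<Longrightarrow> qform A v = of_real (Re (qform A v))"
  unfolding psd_def by (metis Reals_cases Re_complex_of_real)

lemma quadratic_nonneg_discriminant:
  fixes qx qy S :: real
  assumes "qx \<ge> 0" "qy \<ge> 0" "S \<ge> 0" and nonneg: "\<And>t. 0 \<le> qx - 2*t*S + t^2 * S * qy"
  shows "S \<le> qx * qy"
proof (cases "qy > 0")
  case True
  have "0 \<le> qx - 2*(1/qy)*S + (1/qy)^2 * S * qy" by (rule nonneg)
  also have "\<dots> = qx - S/qy" using True by (simp add: power2_eq_square field_simps)
  finally show ?thesis using True by (simp add: field_simps)
next
  case False
  then have qy: "qy = 0" using assms by simp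
  show ?thesis
  proof (rule ccontr)
    assume "\<not> ?thesis"
    then have "S > 0" using qy by simp
    have "0 \<le> qx - 2*((qx+1)/(2*S))*S + ((qx+1)/(2*S))^2 * S * qy" by (rule nonneg)
    also have "\<dots> = -1" using \<open>S > 0\<close> qy by (simp add: field_simps)
    finally show False by simp
  qed
qed

lemma cauchy_schwarz_form:
  assumes "psd A"
  shows "(cmod (sform A y x))^2 \<le> Re (qform A x) * Re (qform A y)"
proof -
  have herm: "cadj A = A" using assms by (simp add: psd_def)
  define s where "s = sform A y x"
  have "0 \<le> Re (qform A x) - 2*t*(cmod s)^2 + t^2 * (cmod s)^2 * Re (qform A y)" for t :: real
  proof -
    define c where "c = - (of_real t * s)"
    have "0 \<le> Re (qform A (x + c *s y))" using assms by (simp add: psd_def)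
    also have "qform A (x + c *s y) = qform A x + c * cnj s + cnj c * s + (c * cnj c) * qform A y"
      using qform_line[OF herm] s_def by simp
    also have "c * cnj s = - of_real (t * (cmod s)^2)"
      by (simp add: c_def complex_norm_square[symmetric] mult.assoc del: of_real_power)
    also have "cnj c * s = - of_real (t * (cmod s)^2)"
      by (simp add: c_def complex_norm_square[symmetric] mult.commute mult.left_commute
          del: of_real_power)
    also have "c * cnj c = of_real (t^2 * (cmod s)^2)"
      by (simp add: c_def complex_norm_square[symmetric] power2_eq_square algebra_simps
          del: of_real_power)
    finally show ?thesis by (simp add: algebra_simps)
  qed
  moreover have "Re (qform A x) \<ge> 0" "Re (qform A y) \<ge> 0" using assms by (auto simp: psd_def)
  ultimately show ?thesis unfolding s_def by (intro quadratic_nonneg_discriminant) auto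
qed

section \<open>Positive semidefinite matrices have nonnegative trace pairing\<close>

definition outer :: "complex^'n \<Rightarrow> complex^'n^'n" where
  "outer u = (\<chi> k l. u$k * cnj (u$l))"

lemma mtrace_outer: "mtrace (P ** outer u) = qform P u"
  by (simp add: mtrace_def qform_def outer_def matrix_matrix_mult_def matrix_vector_mult_def
      sum_distrib_left mult.commute mult.left_commute)

lemma qform_outer:
  "qform (outer u) v = (\<Sum>k\<in>UNIV. cnj (v$k) * u$k) * cnj (\<Sum>k\<in>UNIV. cnj (v$k) * u$k)"
  by (simp add: qform_def outer_def matrix_vector_mult_def sum_distrib_left sum_distrib_right
      mult.commute mult.left_commute) (rule sum.swap)

lemma qform_diff: "qform (A - B) v = qform A v - qform B v"
  by (simp add: qform_def sum_subtractf algebra_simps)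

lemma sform_column: "sform Y x (axis i 1) = (\<Sum>k\<in>UNIV. cnj (x$k) * Y$k$i)"
  by (simp add: sform_def matrix_vector_mult_def axis_def if_distrib[where f="\<lambda>x. _ * x"]
      cong: if_cong)

lemma sform_axis: "sform Y (axis k 1) (axis i 1) = Y$k$i"
  unfolding sform_column
  by (simp add: axis_def if_distrib[where f=cnj] if_distrib[where f="\<lambda>x. x * _"] cong: if_cong)

lemma qform_axis: "qform Y (axis i 1) = Y$i$i"
  by (simp add: qform_sform sform_axis)

lemma psd_diag: "psd Y \<Longrightarrow> Y$i$i = of_real (Re (Y$i$i)) \<and> Re (Y$i$i) \<ge> 0"
  using psd_qform_real[of Y "axis i 1"] by (simp add: qform_axis psd_def) (metis qform_axis)

lemma psd_zero_diag_row: assumes "psd Y" "Y$k$k = 0" shows "Y$k$i = 0"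
proof -
  have "(cmod (sform Y (axis k 1) (axis i 1)))^2 \<le> Re (qform Y (axis i 1)) * Re (qform Y (axis k 1))"
    by (rule cauchy_schwarz_form[OF assms(1)])
  then show ?thesis using assms(2) by (simp add: sform_axis qform_axis)
qed

lemma cadj_outer: "cadj (outer u) = outer u"
  by (simp add: cadj_def outer_def vec_eq_iff mult.commute)

lemma psd_remove_column:
  assumes Y: "psd Y" and y: "Y$i$i = of_real y" "y > 0"
  defines "u \<equiv> (\<chi> k. Y$k$i / of_real (sqrt y))"
  shows "psd (Y - outer u)"
    and "(Y - outer u)$k$k = Y$k$k - Y$k$i * cnj (Y$k$i) / of_real y"
proof -
  have sq: "of_real (sqrt y) * of_real (sqrt y) = (of_real y :: complex)"
    using y(2) by (simp flip: of_real_mult)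
  have "u$k * cnj (u$l) = Y$k$i * cnj (Y$l$i) / of_real y" for k l
    by (simp add: u_def sq[symmetric])
  then show "(Y - outer u)$k$k = Y$k$k - Y$k$i * cnj (Y$k$i) / of_real y"
    by (simp add: outer_def)
  have "qform (Y - outer u) v \<in> \<real> \<and> 0 \<le> Re (qform (Y - outer u) v)" for v
  proof -
    define z where "z = (\<Sum>k\<in>UNIV. cnj (v$k) * u$k)"
    have z: "z = sform Y v (axis i 1) / of_real (sqrt y)"
      by (simp add: z_def sform_column u_def sum_divide_distrib)
    have "(cmod (sform Y v (axis i 1)))^2 \<le> Re (qform Y v) * y"
      using cauchy_schwarz_form[OF Y, of v "axis i 1"] y by (simp add: qform_axis mult.commute)
    then have le: "(cmod z)^2 \<le> Re (qform Y v)"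
      using y(2) by (simp add: z norm_divide power_divide divide_le_eq)
    have "qform (outer u) v = of_real ((cmod z)^2)"
      by (simp only: qform_outer z_def[symmetric] complex_norm_square)
    then have "qform (Y - outer u) v = of_real (Re (qform Y v) - (cmod z)^2)"
      unfolding qform_diff by (subst psd_qform_real[OF Y]) simp
    then show ?thesis using le by simp
  qed
  moreover have "cadj (Y - outer u) = Y - outer u"
    using Y by (simp add: psd_def cadj_diff cadj_outer)
  ultimately show "psd (Y - outer u)" by (simp add: psd_def)
qed

lemma psd_peel:
  assumes Y: "psd Y" and i: "Y$i$i \<noteq> 0"
  obtains u where "psd (Y - outer u)" "{k. (Y - outer u)$k$k \<noteq> 0} \<subset> {k. Y$k$k \<noteq> 0}"
proof -
  define y where "y = Re (Y$i$i)"
  have Yii: "Y$i$i = of_real y" using psd_diag[OF Y] y_def by blast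
  moreover have "y \<ge> 0" using psd_diag[OF Y, of i] y_def by blast
  ultimately have "y > 0" using i by (cases "y = 0") auto
  define u where "u = (\<chi> k. Y$k$i / of_real (sqrt y))"
  note peel = psd_remove_column[OF Y Yii \<open>y > 0\<close>, folded u_def]
  have "(Y - outer u)$i$i = 0"
    using peel(2)[of i] Yii \<open>y > 0\<close> by (simp add: power2_eq_square)
  moreover have "(Y - outer u)$k$k = 0" if "Y$k$k = 0" for k
    using peel(2)[of k] psd_zero_diag_row[OF Y that] that by simp
  ultimately have "{k. (Y - outer u)$k$k \<noteq> 0} \<subset> {k. Y$k$k \<noteq> 0}" using i by blast
  with peel(1) show ?thesis by (rule that)
qed

text \<open>The pairing \<open>Tr(P Y)\<close> of two psd matrices is nonnegative: peel \<open>Y\<close> into rank-one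
  pieces \<open>|u\<rangle>\<langle>u|\<close>, each of which contributes \<open>\<langle>u, P u\<rangle> \<ge> 0\<close>.\<close>
lemma psd_trace_nonneg:
  assumes P: "psd P" and Y: "psd Y"
  shows "0 \<le> Re (mtrace (P ** Y))"
  using Y
proof (induction "card {k. Y$k$k \<noteq> 0}" arbitrary: Y rule: less_induct)
  case less
  show ?case
  proof (cases "\<exists>i. Y$i$i \<noteq> 0")
    case False
    then have "Y = 0" using psd_zero_diag_row[OF less.prems] by (simp add: vec_eq_iff)
    then show ?thesis by (simp add: mtrace_def)
  next
    case True
    then obtain i where "Y$i$i \<noteq> 0" by blast
    then obtain u where u: "psd (Y - outer u)" "{k. (Y - outer u)$k$k \<noteq> 0} \<subset> {k. Y$k$k \<noteq> 0}"
      using psd_peel[OF less.prems] by blast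
    moreover have "card {k. (Y - outer u)$k$k \<noteq> 0} < card {k. Y$k$k \<noteq> 0}"
      using u(2) by (simp add: psubset_card_mono)
    ultimately have "0 \<le> Re (mtrace (P ** (Y - outer u)))" using less.hyps by blast
    moreover have "mtrace (P ** Y) = mtrace (P ** (Y - outer u)) + qform P u"
      by (simp add: matrix_diff_ldistrib mtrace_diff mtrace_outer)
    moreover have "0 \<le> Re (qform P u)" using P by (simp add: psd_def)
    ultimately show ?thesis by simp
  qed
qed

section \<open>Closure properties, the Loewner order and the trace\<close>

lemma qform_add: "qform (A + B) v = qform A v + qform B v"
  by (simp add: qform_def sum.distrib algebra_simps)

lemma qform_scaleR: "qform ((r::real) *\<^sub>R A) v = of_real r * qform A v"
  by (simp add: qform_def matrix_vector_mult_def sum_distrib_left algebra_simps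
      del: vector_scaleR_component)

lemma psd_add: "psd A \<Longrightarrow> psd B \<Longrightarrow> psd (A + B)"
  by (auto simp: psd_def cadj_add qform_add)

lemma psd_scaleR: "psd A \<Longrightarrow> (r::real) \<ge> 0 \<Longrightarrow> psd (r *\<^sub>R A)"
  by (auto simp: psd_def cadj_scaleR qform_scaleR)

lemma cadj_mv: "(cadj C *v w)$i = (\<Sum>j\<in>UNIV. cnj (C$j$i) * w$j)"
  by (simp add: matrix_vector_mult_def cadj_def)

lemma sform_adj: "sform (cadj C ** A) x y = sform A (C *v x) y"
proof -
  have "sform (cadj C ** A) x y = (\<Sum>i\<in>UNIV. \<Sum>j\<in>UNIV. cnj (x$i) * cnj (C$j$i) * (A *v y)$j)"
    by (simp add: sform_def matrix_vector_mul_assoc[symmetric] cadj_mv sum_distrib_left mult.assoc)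
  also have "\<dots> = (\<Sum>j\<in>UNIV. \<Sum>i\<in>UNIV. cnj (x$i) * cnj (C$j$i) * (A *v y)$j)"
    by (rule sum.swap)
  also have "\<dots> = sform A (C *v x) y"
    by (simp add: sform_def matrix_vector_mult_def[of C] sum_distrib_right sum_distrib_left
        mult.commute mult.left_commute)
  finally show ?thesis .
qed

lemma qform_congruence: "qform (cadj C ** Y ** C) v = qform Y (C *v v)"
proof -
  have "qform (cadj C ** Y ** C) v = sform (cadj C ** (Y ** C)) v v"
    by (simp add: qform_sform matrix_mul_assoc)
  also have "\<dots> = sform (Y ** C) (C *v v) v" by (rule sform_adj)
  also have "\<dots> = qform Y (C *v v)"
    by (simp add: sform_def qform_def matrix_vector_mul_assoc[symmetric])
  finally show ?thesis .
qed

lemma psd_congruence: "psd Y \<Longrightarrow> psd (cadj C ** Y ** C)"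
  by (auto simp: psd_def qform_congruence cadj_mult matrix_mul_assoc)

lemma psd_id: "psd (mat 1 :: complex^'n^'n)"
proof -
  have "qform (mat 1) v = of_real (\<Sum>i\<in>UNIV. (cmod (v$i))^2)" for v :: "complex^'n"
    by (simp add: qform_def complex_norm_square mult.commute del: of_real_power)
  then show ?thesis by (auto simp: psd_def intro: sum_nonneg)
qed

lemma psd_gram: "psd (cadj C ** C)"
  using psd_congruence[OF psd_id, of C] by simp

lemma projector_psd: "projector P \<Longrightarrow> psd P"
  using psd_gram[of P] by (simp add: projector_def)

lemma psd_trace: "psd Y \<Longrightarrow> 0 \<le> Re (mtrace Y)"
  using psd_trace_nonneg[OF psd_id] by simp

lemma loewner_trace: "loewner_le A B \<Longrightarrow> psd Y \<Longrightarrow> Re (mtrace (A ** Y)) \<le> Re (mtrace (B ** Y))"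
  using psd_trace_nonneg[of "B - A" Y] by (simp add: loewner_le_def matrix_diff_rdistrib mtrace_diff)

text \<open>It follows from \<open>Tr(C\<^sup>\<dagger> C \<rho>) \<ge> 0\<close> for the centred operator \<open>C = B - Tr(B \<rho>) I\<close>.\<close>
lemma trace_cauchy_schwarz:
  assumes "density \<rho>"
  shows "(cmod (mtrace (B ** \<rho>)))^2 \<le> Re (mtrace (cadj B ** B ** \<rho>))"
proof -
  define l where "l = mtrace (B ** \<rho>)"
  define C where "C = B - mat l"
  have rho: "psd \<rho>" "mtrace \<rho> = 1" using assms by (auto simp: density_def)
  have herm: "cadj \<rho> = \<rho>" using rho by (simp add: psd_def)
  have t1: "mtrace (cadj B ** mat l ** \<rho>) = l * cnj l"
  proof -
    have "mtrace (cadj B ** mat l ** \<rho>) = l * mtrace (\<rho> ** cadj B)"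
      by (metis matrix_mul_assoc mtrace_comm mtrace_mat_left)
    also have "mtrace (\<rho> ** cadj B) = cnj l"
      by (metis cadj_mult herm l_def mtrace_cadj)
    finally show ?thesis .
  qed
  have t2: "mtrace (mat (cnj l) ** B ** \<rho>) = cnj l * l"
    by (simp add: matrix_mul_assoc[symmetric] mtrace_mat_left l_def)
  have t3: "mtrace (mat (cnj l) ** mat l ** \<rho>) = cnj l * l"
    by (simp add: matrix_mul_assoc[symmetric] mtrace_mat_left rho(2))
  have "cadj C ** C ** \<rho> = cadj B ** B ** \<rho> - cadj B ** mat l ** \<rho> - mat (cnj l) ** B ** \<rho>
        + mat (cnj l) ** mat l ** \<rho>"
    by (simp add: C_def cadj_diff matrix_diff_ldistrib matrix_diff_rdistrib matrix_add_rdistrib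
        algebra_simps)
  then have "mtrace (cadj C ** C ** \<rho>) = mtrace (cadj B ** B ** \<rho>) - l * cnj l"
    by (simp add: mtrace_add mtrace_diff t1 t2 t3)
  moreover have "0 \<le> Re (mtrace (cadj C ** C ** \<rho>))" by (rule psd_trace_nonneg[OF psd_gram rho(1)])
  moreover have "Re (l * cnj l) = (cmod l)^2"
    by (simp add: complex_norm_square[symmetric] del: of_real_power)
  ultimately show ?thesis by (simp add: l_def)
qed

section \<open>Random codes\<close>

definition codes :: "nat \<Rightarrow> 'x::finite list set" where
  "codes n = {c. length c = n}"

definition code_prob :: "('x \<Rightarrow> real) \<Rightarrow> nat \<Rightarrow> 'x list \<Rightarrow> real" where
  "code_prob p n c = (\<Prod>m<n. p (c ! m))"

lemma finite_codes [simp]: "finite (codes n)"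
  by (simp add: codes_def finite_list_length)

lemma codes_0 [simp]: "codes 0 = {[]}"
  by (auto simp: codes_def)

lemma code_prob_nonneg: "(\<And>x. 0 \<le> p x) \<Longrightarrow> 0 \<le> code_prob p n c"
  by (simp add: code_prob_def prod_nonneg)

lemma code_prob_snoc: "length xs = n \<Longrightarrow> code_prob p (Suc n) (xs @ [x]) = code_prob p n xs * p x"
proof -
  assume len: "length xs = n"
  have "(\<Prod>m<n. p ((xs @ [x]) ! m)) = (\<Prod>m<n. p (xs ! m))"
    by (rule prod.cong) (auto simp: nth_append len)
  then show ?thesis using len by (simp add: code_prob_def nth_append)
qed

lemma sum_codes_Suc:
  fixes f :: "'x::finite list \<Rightarrow> 'b::real_vector"
  shows "(\<Sum>c\<in>codes (Suc n). code_prob p (Suc n) c *\<^sub>R f c)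
       = (\<Sum>xs\<in>codes n. \<Sum>x\<in>UNIV. (code_prob p n xs * p x) *\<^sub>R f (xs @ [x]))"
proof -
  have codes_Suc: "codes (Suc n) = (\<lambda>(xs, x). xs @ [x]) ` (codes n \<times> UNIV)"
    by (auto simp: codes_def length_Suc_conv_rev image_iff)
  have inj: "inj_on (\<lambda>(xs, x). xs @ [x]) (codes n \<times> (UNIV::'x set))"
    by (auto simp: inj_on_def)
  have "(\<Sum>c\<in>codes (Suc n). code_prob p (Suc n) c *\<^sub>R f c)
      = (\<Sum>(xs,x)\<in>codes n \<times> UNIV. code_prob p (Suc n) (xs @ [x]) *\<^sub>R f (xs @ [x]))"
    unfolding codes_Suc by (subst sum.reindex[OF inj]) (simp add: case_prod_beta)
  also have "\<dots> = (\<Sum>(xs,x)\<in>codes n \<times> UNIV. (code_prob p n xs * p x) *\<^sub>R f (xs @ [x]))"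
    by (rule sum.cong) (auto simp: codes_def code_prob_snoc)
  finally show ?thesis by (simp add: sum.cartesian_product)
qed

lemma sum_codes_Suc_real:
  fixes f :: "'x::finite list \<Rightarrow> real"
  shows "(\<Sum>c\<in>codes (Suc n). code_prob p (Suc n) c * f c)
       = (\<Sum>xs\<in>codes n. \<Sum>x\<in>UNIV. (code_prob p n xs * p x) * f (xs @ [x]))"
  using sum_codes_Suc[of p n f] by simp

lemma code_prob_sum:
  assumes "(\<Sum>x\<in>UNIV. p x) = 1"
  shows "(\<Sum>c\<in>codes n. code_prob p n c) = 1"
proof (induct n)
  case 0
  show ?case by (simp add: code_prob_def)
next
  case (Suc n)
  have "(\<Sum>c\<in>codes (Suc n). code_prob p (Suc n) c * 1)
      = (\<Sum>xs\<in>codes n. \<Sum>x\<in>UNIV. (code_prob p n xs * p x) * 1)"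
    by (rule sum_codes_Suc_real)
  also have "\<dots> = 1" by (simp add: sum_distrib_left[symmetric] assms Suc)
  finally show ?case by simp
qed

lemma sum_codes_take:
  assumes "(\<Sum>x\<in>UNIV. p x) = 1" and "k \<le> n"
  shows "(\<Sum>c\<in>codes n. code_prob p n c * g (take k c)) = (\<Sum>c\<in>codes k. code_prob p k c * g c)"
  using assms(2)
proof (induct n)
  case 0
  then show ?case by simp
next
  case (Suc n)
  show ?case
  proof (cases "k = Suc n")
    case True
    then show ?thesis by (intro sum.cong) (auto simp: codes_def)
  next
    case False
    then have kn: "k \<le> n" using Suc by simp
    have "(\<Sum>c\<in>codes (Suc n). code_prob p (Suc n) c * g (take k c))
        = (\<Sum>xs\<in>codes n. \<Sum>x\<in>UNIV. p x * (code_prob p n xs * g (take k xs)))"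
      unfolding sum_codes_Suc_real using kn by (intro sum.cong refl) (auto simp: codes_def)
    also have "\<dots> = (\<Sum>xs\<in>codes n. code_prob p n xs * g (take k xs))"
      by (simp add: sum_distrib_right[symmetric] assms(1))
    finally show ?thesis using Suc kn by simp
  qed
qed

lemma jensen_square:
  fixes w r :: "'i \<Rightarrow> real"
  assumes "finite S" "\<And>i. i \<in> S \<Longrightarrow> w i \<ge> 0" "(\<Sum>i\<in>S. w i) = 1"
  shows "(\<Sum>i\<in>S. w i * r i)^2 \<le> (\<Sum>i\<in>S. w i * (r i)^2)"
proof -
  define \<mu> where "\<mu> = (\<Sum>i\<in>S. w i * r i)"
  have "0 \<le> (\<Sum>i\<in>S. w i * (r i - \<mu>)^2)" using assms by (intro sum_nonneg) auto
  also have "\<dots> = (\<Sum>i\<in>S. w i * (r i)^2 - (2 * \<mu>) * (w i * r i) + \<mu>^2 * w i)"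
    by (rule sum.cong) (simp_all add: power2_eq_square algebra_simps)
  also have "\<dots> = (\<Sum>i\<in>S. w i * (r i)^2) - (2 * \<mu>) * (\<Sum>i\<in>S. w i * r i) + \<mu>^2 * (\<Sum>i\<in>S. w i)"
    by (simp only: sum.distrib sum_subtractf sum_distrib_left[symmetric])
  finally show ?thesis using assms(3) by (simp add: \<mu>_def power2_eq_square)
qed

lemma code_expect_psucc:
  assumes "M > 0"
  shows "code_expect p M (psucc Cproj Px rho)
     = (1 / real M) * (\<Sum>m<M. \<Sum>c\<in>codes M.
          code_prob p M c * Re (mtrace (seqPOVM Cproj Px c m ** rho (c ! m))))"
  unfolding code_expect_def psucc_def codes_def code_prob_def
  by (simp add: sum_distrib_left sum.swap[of _ "{c. length c = M}"] mult.commute mult.left_commute)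

section \<open>The sequential decoder\<close>

fun mpow :: "'a::semiring_1^'n^'n \<Rightarrow> nat \<Rightarrow> 'a^'n^'n" where
  "mpow B 0 = mat 1"
| "mpow B (Suc m) = B ** mpow B m"

lemma mpow_comm: "B ** mpow B m = mpow B m ** B"
  by (induct m) (simp_all add: matrix_mul_assoc)

locale packing_setup =
  fixes p :: "'x::finite \<Rightarrow> real"
    and rho :: "'x \<Rightarrow> complex^'n::finite^'n"
    and Cproj :: "complex^'n^'n"
    and Px :: "'x \<Rightarrow> complex^'n^'n"
    and D d \<epsilon> :: real
  assumes p_nonneg: "\<And>x. 0 \<le> p x"
    and p_sum: "(\<Sum>x\<in>UNIV. p x) = 1"
    and rho_density: "\<And>x. density (rho x)"
    and Pi_proj: "projector Cproj"
    and Px_proj: "\<And>x. projector (Px x)"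
    and D_pos: "D > 0" and d_pos: "d > 0"
    and tr_Pi: "\<And>x. Re (mtrace (Cproj ** rho x)) \<ge> 1 - \<epsilon>"
    and tr_Px: "\<And>x. Re (mtrace (Px x ** rho x)) \<ge> 1 - \<epsilon>"
    and Px_lower: "\<And>x. loewner_le ((1/d) *\<^sub>R Px x) (Px x ** rho x ** Px x)"
    and Pi_upper: "loewner_le (Cproj ** (\<Sum>x\<in>UNIV. p x *\<^sub>R rho x) ** Cproj) ((1/D) *\<^sub>R Cproj)"
    and commute: "\<And>x. Px x ** rho x = rho x ** Px x"
begin

definition "Qbar x = Cproj ** (mat 1 - Px x) ** Cproj"
definition "Bavg = (\<Sum>x\<in>UNIV. p x *\<^sub>R Qbar x)"
definition "Abar = Cproj ** (\<Sum>x\<in>UNIV. p x *\<^sub>R Px x) ** Cproj"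
definition "a = d / D"

lemma PiPi: "Cproj ** Cproj = Cproj"
  using Pi_proj by (simp add: projector_def)

lemma Pi_herm: "cadj Cproj = Cproj"
  using Pi_proj by (simp add: projector_def)

lemma PxPx: "Px x ** Px x = Px x"
  using Px_proj by (simp add: projector_def)

lemma Px_herm: "cadj (Px x) = Px x"
  using Px_proj by (simp add: projector_def)

lemma rho_psd: "psd (rho x)"
  using rho_density by (simp add: density_def)

lemma a_nonneg: "a \<ge> 0"
  using d_pos D_pos by (simp add: a_def)

text \<open>Since \<open>\<Pi>\<^sub>x\<close> commutes with \<open>\<rho>\<^sub>x\<close>, the state splits into the two psd pieces
  \<open>\<Pi>\<^sub>x \<rho>\<^sub>x\<close> and \<open>(I - \<Pi>\<^sub>x) \<rho>\<^sub>x (I - \<Pi>\<^sub>x) = \<rho>\<^sub>x - \<Pi>\<^sub>x \<rho>\<^sub>x\<close>.\<close>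
lemma Px_rho_Px: "Px x ** rho x ** Px x = Px x ** rho x"
  by (metis PxPx commute matrix_mul_assoc)

lemma Px_rho_psd: "psd (Px x ** rho x)"
  using psd_congruence[OF rho_psd, of "Px x" x] by (simp add: Px_herm Px_rho_Px)

lemma rho_minus_Px_rho_psd: "psd (rho x - Px x ** rho x)"
proof -
  have "cadj (mat 1 - Px x) ** rho x ** (mat 1 - Px x)
      = rho x - rho x ** Px x - Px x ** rho x + Px x ** rho x ** Px x"
    by (simp add: cadj_diff Px_herm matrix_diff_ldistrib matrix_diff_rdistrib)
  also have "\<dots> = rho x - Px x ** rho x"
    by (simp only: Px_rho_Px commute[symmetric]) simp
  finally show ?thesis using psd_congruence[OF rho_psd, of "mat 1 - Px x" x] by simp
qed

lemma Px_le_rho: "loewner_le (Px x) (d *\<^sub>R rho x)"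
proof -
  have "d *\<^sub>R rho x - Px x = d *\<^sub>R (rho x - Px x ** rho x)
      + d *\<^sub>R (Px x ** rho x ** Px x - (1/d) *\<^sub>R Px x)"
    using d_pos by (simp add: Px_rho_Px algebra_simps)
  moreover have "psd (d *\<^sub>R (rho x - Px x ** rho x))"
    using rho_minus_Px_rho_psd d_pos by (simp add: psd_scaleR)
  moreover have "psd (d *\<^sub>R (Px x ** rho x ** Px x - (1/d) *\<^sub>R Px x))"
    using Px_lower[of x] d_pos by (simp add: loewner_le_def psd_scaleR)
  ultimately show ?thesis by (simp add: loewner_le_def psd_add)
qed

lemma mtrace_avg: "mtrace ((\<Sum>x\<in>UNIV. p x *\<^sub>R F x) ** Y) = (\<Sum>x\<in>UNIV. of_real (p x) * mtrace (F x ** Y))"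
  by (simp add: matrix_sum_left matrix_scaleR_left mtrace_sum mtrace_scaleR)

lemma Pi_absorb_left: "Cproj ** Y ** Cproj = Y \<Longrightarrow> Cproj ** Y = Y"
  by (metis PiPi matrix_mul_assoc)

lemma mtrace_compress: "Cproj ** Y ** Cproj = Y \<Longrightarrow> mtrace ((Cproj ** X ** Cproj) ** Y) = mtrace (X ** Y)"
  by (metis matrix_mul_assoc mtrace_comm)

text \<open>The key estimate: on operators supported in the code subspace,
  \<open>Tr(Abar Y) \<le> (d/D) Tr Y\<close>, combining \<open>\<Pi>\<^sub>x \<le> d \<rho>\<^sub>x\<close> with \<open>\<Pi> \<rho> \<Pi> \<le> \<Pi>/D\<close>.\<close>
lemma trace_Abar_le:
  assumes Y: "psd Y" and YP: "Cproj ** Y ** Cproj = Y"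
  shows "Re (mtrace (Abar ** Y)) \<le> a * Re (mtrace Y)"
proof -
  have "Re (mtrace (Abar ** Y)) = (\<Sum>x\<in>UNIV. p x * Re (mtrace (Px x ** Y)))"
    unfolding Abar_def mtrace_compress[OF YP] by (simp add: mtrace_avg)
  also have "\<dots> \<le> (\<Sum>x\<in>UNIV. p x * Re (mtrace ((d *\<^sub>R rho x) ** Y)))"
    by (intro sum_mono mult_left_mono p_nonneg loewner_trace[OF Px_le_rho Y])
  also have "\<dots> = d * Re (mtrace ((Cproj ** (\<Sum>x\<in>UNIV. p x *\<^sub>R rho x) ** Cproj) ** Y))"
    unfolding mtrace_compress[OF YP]
    by (simp add: mtrace_avg matrix_scaleR_left mtrace_scaleR sum_distrib_left algebra_simps)
  also have "\<dots> \<le> d * Re (mtrace (((1/D) *\<^sub>R Cproj) ** Y))"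
    using loewner_trace[OF Pi_upper Y] d_pos by simp
  also have "\<dots> = a * Re (mtrace Y)"
    by (simp add: a_def matrix_scaleR_left mtrace_scaleR Pi_absorb_left[OF YP])
  finally show ?thesis .
qed

lemma Bavg_eq: "Bavg = Cproj - Abar"
proof -
  have Qbar: "Qbar x = Cproj - Cproj ** Px x ** Cproj" for x
    by (simp add: Qbar_def matrix_diff_ldistrib matrix_diff_rdistrib PiPi)
  have "(\<Sum>x\<in>UNIV. p x *\<^sub>R Cproj) = Cproj"
    by (simp add: scaleR_sum_left[symmetric] p_sum)
  then show ?thesis
    by (simp add: Bavg_def Abar_def Qbar scaleR_diff_right sum_subtractf matrix_sum_left
        matrix_sum_right matrix_scaleR_left matrix_scaleR_right)
qed

lemma Abar_herm: "cadj Abar = Abar"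
  by (simp add: Abar_def cadj_mult cadj_sum cadj_scaleR Px_herm Pi_herm matrix_mul_assoc)

lemma Pi_Abar: "Cproj ** Abar = Abar" "Abar ** Cproj = Abar"
  by (simp_all add: Abar_def matrix_mul_assoc PiPi) (simp add: matrix_mul_assoc[symmetric] PiPi)

lemma Pi_Bavg: "Cproj ** Bavg = Bavg" "Bavg ** Cproj = Bavg"
  by (simp_all add: Bavg_eq matrix_diff_ldistrib matrix_diff_rdistrib PiPi Pi_Abar)

lemma Bavg_herm: "cadj Bavg = Bavg"
  by (simp add: Bavg_eq cadj_diff Pi_herm Abar_herm)

lemma trace_Bavg_lower:
  assumes Y: "psd Y" and YP: "Cproj ** Y ** Cproj = Y"
  shows "(1 - a) * Re (mtrace Y) \<le> Re (mtrace (Bavg ** Y))"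
proof -
  have "mtrace (Bavg ** Y) = mtrace Y - mtrace (Abar ** Y)"
    by (simp add: Bavg_eq matrix_diff_rdistrib mtrace_diff Pi_absorb_left[OF YP])
  then have "Re (mtrace (Bavg ** Y)) = Re (mtrace Y) - Re (mtrace (Abar ** Y))" by simp
  then show ?thesis using trace_Abar_le[OF Y YP] by (simp add: algebra_simps)
qed

lemma trace_Bavg_sq_lower:
  assumes Y: "psd Y" and YP: "Cproj ** Y ** Cproj = Y"
  shows "(1 - 2*a) * Re (mtrace Y) \<le> Re (mtrace (Bavg ** Bavg ** Y))"
proof -
  have "Bavg ** Bavg = Cproj - Abar - Abar + cadj Abar ** Abar"
    by (simp add: Bavg_eq matrix_diff_ldistrib matrix_diff_rdistrib PiPi Pi_Abar Abar_herm)
  then have "mtrace (Bavg ** Bavg ** Y)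
      = mtrace Y - mtrace (Abar ** Y) - mtrace (Abar ** Y) + mtrace (cadj Abar ** Abar ** Y)"
    by (simp only: matrix_diff_rdistrib matrix_add_rdistrib mtrace_diff mtrace_add
        Pi_absorb_left[OF YP])
  then have "Re (mtrace (Bavg ** Bavg ** Y)) = Re (mtrace Y) - 2 * Re (mtrace (Abar ** Y))
      + Re (mtrace (cadj Abar ** Abar ** Y))" by simp
  moreover have "0 \<le> Re (mtrace (cadj Abar ** Abar ** Y))"
    by (rule psd_trace_nonneg[OF psd_gram Y])
  ultimately show ?thesis using trace_Abar_le[OF Y YP] by (simp add: algebra_simps)
qed

text \<open>Iterating two steps at a time (\<open>Y \<mapsto> Bavg Y Bavg\<close> keeps \<open>Y\<close> psd and in the code
  subspace, and \<open>(1 - ka)(1 - 2a) \<ge> 1 - (k+2)a\<close>) gives \<open>Tr(Bavg\<^sup>m Y) \<ge> (1 - ma) Tr Y\<close>.\<close>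
lemma trace_Bavg_pow_lower:
  "psd Y \<Longrightarrow> Cproj ** Y ** Cproj = Y \<Longrightarrow> real m * a \<le> 1 \<Longrightarrow>
    (1 - real m * a) * Re (mtrace Y) \<le> Re (mtrace (mpow Bavg m ** Y))"
proof (induction m arbitrary: Y rule: nat_induct2)
  case 0
  then show ?case by simp
next
  case 1
  then show ?case using trace_Bavg_lower by simp
next
  case (step k)
  note Y = step.prems(1) and YP = step.prems(2)
  define Y' where "Y' = Bavg ** Y ** Bavg"
  have Y': "psd Y'" "Cproj ** Y' ** Cproj = Y'"
    using psd_congruence[OF Y, of Bavg]
    by (simp_all add: Y'_def Bavg_herm matrix_mul_assoc Pi_Bavg)
      (simp add: matrix_mul_assoc[symmetric] Pi_Bavg)
  have ka: "real k * a \<le> 1" using step.prems(3) a_nonneg by (simp add: algebra_simps)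
  have shift: "mtrace (mpow Bavg (k + 2) ** Y) = mtrace (mpow Bavg k ** Y')"
    by (metis (no_types) Y'_def add_2_eq_Suc' matrix_mul_assoc mpow.simps(2) mpow_comm mtrace_comm)
  have "mtrace Y' = mtrace (Bavg ** Bavg ** Y)"
    by (metis Y'_def matrix_mul_assoc mtrace_comm)
  then have "(1 - real k * a) * ((1 - 2*a) * Re (mtrace Y)) \<le> (1 - real k * a) * Re (mtrace Y')"
    using trace_Bavg_sq_lower[OF Y YP] ka by (simp add: mult_left_mono)
  moreover have "(1 - real (k + 2) * a) * Re (mtrace Y) \<le> (1 - real k * a) * ((1 - 2*a) * Re (mtrace Y))"
  proof -
    have "(1 - real k * a) * (1 - 2*a) = 1 - real (k + 2) * a + 2 * real k * a * a"
      by (simp add: algebra_simps)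
    moreover have "0 \<le> 2 * real k * a * a * Re (mtrace Y)" using a_nonneg psd_trace[OF Y] by simp
    ultimately show ?thesis by (simp add: algebra_simps)
  qed
  moreover have "(1 - real k * a) * Re (mtrace Y') \<le> Re (mtrace (mpow Bavg (k + 2) ** Y))"
    using step.IH[OF Y' ka] shift by simp
  ultimately show ?case by linarith
qed

lemma Qbar_herm: "cadj (Qbar x) = Qbar x"
  by (simp add: Qbar_def cadj_mult cadj_diff Pi_herm Px_herm matrix_mul_assoc)

lemma prodL_eq_cadj_prodR: "prodL Cproj Px xs = cadj (prodR Cproj Px xs)"
  by (induct xs) (simp_all add: Qbar_def[symmetric] cadj_mult Qbar_herm)

lemma prodR_snoc: "prodR Cproj Px (xs @ [x]) = Qbar x ** prodR Cproj Px xs"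
  by (induct xs) (simp_all add: Qbar_def[symmetric] matrix_mul_assoc)

lemma expected_prodR: "(\<Sum>xs\<in>codes m. code_prob p m xs *\<^sub>R prodR Cproj Px xs) = mpow Bavg m"
proof (induct m)
  case 0
  then show ?case by (simp add: code_prob_def)
next
  case (Suc m)
  have "(\<Sum>xs\<in>codes (Suc m). code_prob p (Suc m) xs *\<^sub>R prodR Cproj Px xs)
     = (\<Sum>xs\<in>codes m. \<Sum>x\<in>UNIV. (p x *\<^sub>R Qbar x) ** (code_prob p m xs *\<^sub>R prodR Cproj Px xs))"
    by (simp add: sum_codes_Suc prodR_snoc matrix_scaleR_left matrix_scaleR_right mult.commute)
  also have "\<dots> = (\<Sum>xs\<in>codes m. Bavg ** (code_prob p m xs *\<^sub>R prodR Cproj Px xs))"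
    by (simp add: Bavg_def matrix_sum_left)
  also have "\<dots> = Bavg ** mpow Bavg m"
    by (simp add: matrix_sum_right[symmetric] Suc)
  finally show ?case by simp
qed

lemma seqPOVM_gram:
  assumes "length xs = m"
  shows "seqPOVM Cproj Px (xs @ [x]) m
       = cadj (Px x ** Cproj ** prodR Cproj Px xs) ** (Px x ** Cproj ** prodR Cproj Px xs)"
proof -
  have "Cproj ** Px x ** Cproj = cadj (Px x ** Cproj) ** (Px x ** Cproj)"
    by (simp add: cadj_mult Pi_herm Px_herm matrix_mul_assoc)
      (simp add: matrix_mul_assoc[symmetric] PxPx)
  then show ?thesis
    using assms by (simp add: seqPOVM_def prodL_eq_cadj_prodR cadj_mult matrix_mul_assoc nth_append)
qed

text \<open>The compressed codeword component \<open>\<Pi> \<Pi>\<^sub>x \<rho>\<^sub>x \<Pi>\<close> retains weight \<open>1 - 2\<epsilon>\<close>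
  (gentle-measurement type estimate, using the commutation \<open>[\<Pi>\<^sub>x, \<rho>\<^sub>x] = 0\<close>).\<close>
lemma codeword_overlap: "1 - 2 * \<epsilon> \<le> Re (mtrace (Cproj ** (Px x ** rho x) ** Cproj))"
proof -
  define W where "W = Px x ** rho x"
  have "projector (mat 1 - Cproj)"
    by (simp add: projector_def matrix_diff_ldistrib matrix_diff_rdistrib PiPi cadj_diff Pi_herm)
  then have pos: "0 \<le> Re (mtrace ((mat 1 - Cproj) ** (rho x - W)))"
    using psd_trace_nonneg[OF projector_psd rho_minus_Px_rho_psd[of x]] by (simp add: W_def)
  have out: "Re (mtrace ((mat 1 - Cproj) ** rho x)) \<le> \<epsilon>"
    using tr_Pi[of x] rho_density[of x] by (simp add: matrix_diff_rdistrib mtrace_diff density_def)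
  have "mtrace (Cproj ** W ** Cproj) = mtrace (Cproj ** W)"
    by (metis PiPi matrix_mul_assoc mtrace_comm)
  moreover have "Cproj ** W = W - (mat 1 - Cproj) ** rho x + (mat 1 - Cproj) ** (rho x - W)"
    by (simp add: matrix_diff_ldistrib matrix_diff_rdistrib)
  ultimately have "Re (mtrace (Cproj ** W ** Cproj)) = Re (mtrace W)
      - Re (mtrace ((mat 1 - Cproj) ** rho x)) + Re (mtrace ((mat 1 - Cproj) ** (rho x - W)))"
    by (simp add: mtrace_add mtrace_diff)
  then show ?thesis using pos out tr_Px[of x] by (simp add: W_def)
qed

lemma Pi_mpow_comm: "Cproj ** mpow Bavg m = mpow Bavg m ** Cproj"
proof (induct m)
  case (Suc m)
  have "Cproj ** (Bavg ** mpow Bavg m) = Bavg ** (Cproj ** mpow Bavg m)"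
    by (simp add: matrix_mul_assoc Pi_Bavg)
  then show ?case by (simp add: Suc matrix_mul_assoc)
qed simp

lemma expected_amplitude_lower:
  assumes ma: "real m * a \<le> 1"
  shows "(1 - real m * a) * (1 - 2*\<epsilon>) \<le> Re (mtrace (Px x ** Cproj ** mpow Bavg m ** rho x))"
proof -
  define Y where "Y = Cproj ** (Px x ** rho x) ** Cproj"
  have Y: "psd Y" "Cproj ** Y ** Cproj = Y"
    using psd_congruence[OF Px_rho_psd, of Cproj x]
    by (simp_all add: Y_def Pi_herm matrix_mul_assoc PiPi) (simp add: matrix_mul_assoc[symmetric] PiPi)
  have "mtrace (Px x ** Cproj ** mpow Bavg m ** rho x) = mtrace (mpow Bavg m ** Y)"
  proof -
    have "mtrace (Px x ** Cproj ** mpow Bavg m ** rho x)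
        = mtrace (Cproj ** mpow Bavg m ** (rho x ** Px x))"
      by (metis matrix_mul_assoc mtrace_comm)
    also have "\<dots> = mtrace (mpow Bavg m ** Cproj ** (Px x ** rho x) ** Cproj)"
      by (metis Pi_mpow_comm PiPi commute matrix_mul_assoc mtrace_comm)
    finally show ?thesis by (simp add: Y_def matrix_mul_assoc)
  qed
  moreover have "(1 - real m * a) * (1 - 2*\<epsilon>) \<le> (1 - real m * a) * Re (mtrace Y)"
    using codeword_overlap[of x] ma by (simp add: Y_def mult_left_mono)
  ultimately show ?thesis using trace_Bavg_pow_lower[OF Y ma] by simp
qed

text \<open>Success of the last message of a code, averaged over the earlier codewords:
  by Cauchy--Schwarz \<open>Tr(\<Lambda> \<rho>\<^sub>x) = Tr(K\<^sup>\<dagger> K \<rho>\<^sub>x) \<ge> |Tr(K \<rho>\<^sub>x)|\<^sup>2\<close>, and by Jensen the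
  average of \<open>|Tr(K \<rho>\<^sub>x)|\<^sup>2\<close> dominates the square of the averaged amplitude.\<close>
lemma last_message_success:
  assumes ma: "real m * a \<le> 1" and eps: "\<epsilon> \<le> 1/2"
  shows "((1 - real m * a) * (1 - 2*\<epsilon>))^2
    \<le> (\<Sum>xs\<in>codes m. code_prob p m xs * Re (mtrace (seqPOVM Cproj Px (xs @ [x]) m ** rho x)))"
proof -
  define z where "z xs = mtrace (Px x ** Cproj ** prodR Cproj Px xs ** rho x)" for xs
  define L where "L = (1 - real m * a) * (1 - 2*\<epsilon>)"
  have w: "\<And>xs. 0 \<le> code_prob p m xs" by (rule code_prob_nonneg[OF p_nonneg])
  have "mtrace (Px x ** Cproj ** mpow Bavg m ** rho x) = (\<Sum>xs\<in>codes m. of_real (code_prob p m xs) * z xs)"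
    by (simp add: expected_prodR[symmetric] z_def matrix_sum_right matrix_sum_left
        matrix_scaleR_left matrix_scaleR_right mtrace_sum mtrace_scaleR)
  then have "L \<le> (\<Sum>xs\<in>codes m. code_prob p m xs * Re (z xs))"
    using expected_amplitude_lower[OF ma, of x] by (simp add: L_def)
  also have "\<dots> \<le> (\<Sum>xs\<in>codes m. code_prob p m xs * cmod (z xs))"
    by (intro sum_mono mult_left_mono w complex_Re_le_cmod)
  finally have "L^2 \<le> (\<Sum>xs\<in>codes m. code_prob p m xs * cmod (z xs))^2"
    using ma eps by (intro power_mono) (simp_all add: L_def)
  also have "\<dots> \<le> (\<Sum>xs\<in>codes m. code_prob p m xs * (cmod (z xs))^2)"
    by (rule jensen_square[OF finite_codes w code_prob_sum[OF p_sum]])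
  also have "\<dots> \<le> (\<Sum>xs\<in>codes m. code_prob p m xs * Re (mtrace (seqPOVM Cproj Px (xs @ [x]) m ** rho x)))"
  proof (intro sum_mono mult_left_mono w)
    fix xs :: "'x list" assume "xs \<in> codes m"
    then show "(cmod (z xs))^2 \<le> Re (mtrace (seqPOVM Cproj Px (xs @ [x]) m ** rho x))"
      using trace_cauchy_schwarz[OF rho_density[of x], of "Px x ** Cproj ** prodR Cproj Px xs"]
      by (simp add: seqPOVM_gram codes_def z_def)
  qed
  finally show ?thesis by (simp add: L_def)
qed

text \<open>Expected success probability of message \<open>m\<close> in a random code of length \<open>M\<close>: it only
  depends on the first \<open>m + 1\<close> codewords, and the last of them is independent of the rest.\<close>
lemma message_success:
  assumes mM: "m < M" and ma: "real m * a \<le> 1" and eps: "\<epsilon> \<le> 1/2"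
  shows "((1 - real m * a) * (1 - 2*\<epsilon>))^2
    \<le> (\<Sum>c\<in>codes M. code_prob p M c * Re (mtrace (seqPOVM Cproj Px c m ** rho (c ! m))))"
proof -
  define f where "f c = Re (mtrace (seqPOVM Cproj Px c m ** rho (c ! m)))" for c
  have "(\<Sum>c\<in>codes M. code_prob p M c * f c) = (\<Sum>c\<in>codes M. code_prob p M c * f (take (Suc m) c))"
    using mM by (intro sum.cong refl) (simp add: codes_def f_def seqPOVM_def min_def)
  also have "\<dots> = (\<Sum>c\<in>codes (Suc m). code_prob p (Suc m) c * f c)"
    using mM by (intro sum_codes_take[OF p_sum]) simp
  also have "\<dots> = (\<Sum>x\<in>UNIV. p x * (\<Sum>xs\<in>codes m. code_prob p m xs *
          Re (mtrace (seqPOVM Cproj Px (xs @ [x]) m ** rho x))))"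
    unfolding sum_codes_Suc_real
    by (subst sum.swap) (auto simp: sum_distrib_left f_def codes_def nth_append
        mult.commute mult.left_commute intro!: sum.cong)
  finally have e: "(\<Sum>c\<in>codes M. code_prob p M c * f c) = \<dots>" .
  have "((1 - real m * a) * (1 - 2*\<epsilon>))^2 = (\<Sum>x\<in>UNIV. p x * ((1 - real m * a) * (1 - 2*\<epsilon>))^2)"
    by (simp add: sum_distrib_right[symmetric] p_sum)
  also have "\<dots> \<le> (\<Sum>x\<in>UNIV. p x * (\<Sum>xs\<in>codes m. code_prob p m xs *
          Re (mtrace (seqPOVM Cproj Px (xs @ [x]) m ** rho x))))"
    by (intro sum_mono mult_left_mono p_nonneg last_message_success[OF ma eps])
  finally show ?thesis using e by (simp add: f_def)
qed

end

text \<open>Under \<open>e\<^sup>M\<^sup>a < 2\<close>, every message index \<open>m < M\<close> satisfies \<open>ma \<le> 1\<close> and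
  \<open>2 - e\<^sup>M\<^sup>a \<le> 1 - ma\<close> (from \<open>1 + t \<le> e\<^sup>t\<close>).\<close>
lemma exp_margin:
  fixes a :: real
  assumes "0 \<le> a" "exp (real M * a) < 2" "m < M"
  shows "real m * a \<le> 1" "2 - exp (real M * a) \<le> 1 - real m * a"
proof -
  have "real m * a \<le> real M * a" using assms by (simp add: mult_right_mono)
  moreover have "real M * a \<le> exp (real M * a) - 1"
    using exp_ge_add_one_self[of "real M * a"] by linarith
  ultimately show "real m * a \<le> 1" "2 - exp (real M * a) \<le> 1 - real m * a"
    using assms(2) by linarith+
qed

theorem theorem1:
  fixes p :: "'x::finite \<Rightarrow> real"
    and rho :: "'x \<Rightarrow> complex^'n::finite^'n"
    and Cproj :: "complex^'n^'n"
    and Px :: "'x \<Rightarrow> complex^'n^'n"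
    and D d \<epsilon> :: real
    and M :: nat
  assumes p_nonneg: "\<And>x. 0 \<le> p x"
    and p_sum: "(\<Sum>x\<in>UNIV. p x) = 1"
    and rho_density: "\<And>x. density (rho x)"
    and Pi_proj: "projector Cproj"
    and Px_proj: "\<And>x. projector (Px x)"
    and D_pos: "D > 0" and d_pos: "d > 0"
    and eps_pos: "0 < \<epsilon>" and eps_le: "\<epsilon> \<le> 1/2"
    and tr_Pi: "\<And>x. Re (mtrace (Cproj ** rho x)) \<ge> 1 - \<epsilon>"
    and tr_Px: "\<And>x. Re (mtrace (Px x ** rho x)) \<ge> 1 - \<epsilon>"
    and Px_lower: "\<And>x. loewner_le ((1/d) *\<^sub>R Px x) (Px x ** rho x ** Px x)"
    and Pi_upper: "loewner_le (Cproj ** (\<Sum>x\<in>UNIV. p x *\<^sub>R rho x) ** Cproj) ((1/D) *\<^sub>R Cproj)"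
    and commute: "\<And>x. Px x ** rho x = rho x ** Px x"
    and M_pos: "M > 0"
    and cond: "2 - exp (d * real M / D) > 0"
  shows "code_expect p M (psucc Cproj Px rho)
           \<ge> \<bar>(1 - 2 * \<epsilon>) * (2 - exp (d / D * real M))\<bar>^2"
proof -
  interpret packing_setup p rho Cproj Px D d \<epsilon>
    by unfold_locales (fact p_nonneg p_sum rho_density Pi_proj Px_proj D_pos d_pos tr_Pi tr_Px
        Px_lower Pi_upper commute)+
  define L where "L = (1 - 2 * \<epsilon>) * (2 - exp (real M * a))"
  have margin: "0 \<le> a" "exp (real M * a) < 2"
    using a_nonneg cond by (simp_all add: a_def mult.commute)
  have "L^2 \<le> (\<Sum>c\<in>codes M. code_prob p M c * Re (mtrace (seqPOVM Cproj Px c m ** rho (c ! m))))"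
    if "m < M" for m
  proof -
    note m = exp_margin[OF margin that]
    have "L \<le> (1 - real m * a) * (1 - 2 * \<epsilon>)"
      using m(2) eps_le by (simp add: L_def mult.commute mult_left_mono)
    then have "L^2 \<le> ((1 - real m * a) * (1 - 2 * \<epsilon>))^2"
      using margin eps_le by (intro power_mono) (simp_all add: L_def)
    then show ?thesis using message_success[OF that m(1) eps_le] by linarith
  qed
  then have "(1 / real M) * (\<Sum>m<M. L^2) \<le> code_expect p M (psucc Cproj Px rho)"
    unfolding code_expect_psucc[OF M_pos] by (intro mult_left_mono sum_mono) auto
  then show ?thesis using M_pos by (simp add: L_def a_def mult.commute)
qed

end
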